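(* Let $r\geq2$ and $\beta\in\{1,2\}$ be integers, let $x\in[0,1]^N$, suppose $D_1^\beta x$ satisfies the $\Lambda_M$-minimum separation condition for a positive integer $M$, and let $q\in\mathbb{R}^N$ be such that $\|D^{-r}(x-q)\|_\infty\leq\delta/2$ and $\|(D^{-r}(x-q))_{N-r+1:N}\|_\infty\leq(2N)^{-r}\delta$ (as holds for the $r$-th order $\Sigma\Delta$ quantization of $x$ with step $\delta$ in the interior and step $2\delta/(2N)^r$ for the last $r$ entries). Then for every $\widetilde x\in\mathbb{R}^N$ satisfying $$\|D^{-r}(\widetilde x-q)\|_\infty\leq\delta/2\quad\text{and}\quad\|(D^{-r}(\widetilde x-q))_{N-r+1:N}\|_\infty\leq\Big(\frac1{2N}\Big)^r\delta,$$ we have $\|P_MD_1^\beta(\widetilde x-x)\|_2\leq C\left(\frac MN\right)^{r+\beta}\sqrt N\,\delta$, where $C$ is a constant independent of $\widetilde x$, $x$, $N$, $M$ and $\delta$.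
   Context: $D$ is the $N\times N$ matrix with $1$ on the diagonal, $-1$ on the subdiagonal, $0$ elsewhere; $D_1$ is $D$ with an additional $-1$ in the upper right corner (circulant difference matrix). For a vector $v$, $v_{N-r+1:N}$ denotes its last $r$ entries. $F=\{\omega^{kj}\}_{k,j=0}^{N-1}$, $\omega=e^{-2\pi i/N}$, is the unnormalized DFT matrix; $F_M$ consists of its rows with frequencies $k\in\{-M,\dots,M\}$ (indices mod $N$), and $P_M=\frac1NF_M^*F_M$. The $\Lambda_M$-minimum separation condition for $v\in\mathbb{R}^N$ with support $S\subseteq\{0,\dots,N-1\}$: $\min_{s\neq s'\in S}\frac1Nd(s,s')\geq\frac2M$, with $d(s,s')=\min\{|s-s'|,|s+N-s'|,|s-N-s'|\}$. *)

theory Defs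
  imports Complex_Main
begin

text \<open>Vectors in R^N (resp. C^N) are represented as functions on nat; only the
entries with index i < N matter (indices 0..N-1, as in the paper).\<close>

definition Dmat :: "nat \<Rightarrow> (nat \<Rightarrow> real) \<Rightarrow> nat \<Rightarrow> real" where
  "Dmat N v = (\<lambda>i. v i - (if i = 0 then 0 else v (i - 1)))"

definition Dinv :: "nat \<Rightarrow> (nat \<Rightarrow> real) \<Rightarrow> nat \<Rightarrow> real" where
  "Dinv N v = (\<lambda>i. \<Sum>j\<le>i. v j)"

text \<open>D_1: circulant difference matrix (D with an extra -1 in the upper right corner).\<close>
definition D1mat :: "nat \<Rightarrow> (nat \<Rightarrow> real) \<Rightarrow> nat \<Rightarrow> real" where
  "D1mat N v = (\<lambda>i. v i - v ((i + N - 1) mod N))"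

text \<open>Entry of the unnormalised DFT matrix: omega^(k j), omega = exp(-2 pi i / N);
  the frequency k is an integer (taken mod N, which is automatic by periodicity).\<close>
definition dft_entry :: "nat \<Rightarrow> int \<Rightarrow> nat \<Rightarrow> complex" where
  "dft_entry N k j = cis (- 2 * pi * real_of_int k * real j / real N)"

text \<open>F_M v: the rows of F with frequencies k in {-M..M}.\<close>
definition F_M :: "nat \<Rightarrow> nat \<Rightarrow> (nat \<Rightarrow> real) \<Rightarrow> int \<Rightarrow> complex" where
  "F_M N M v = (\<lambda>k. \<Sum>j<N. dft_entry N k j * complex_of_real (v j))"

definition P_M :: "nat \<Rightarrow> nat \<Rightarrow> (nat \<Rightarrow> real) \<Rightarrow> nat \<Rightarrow> complex" where
  "P_M N M v = (\<lambda>l. (1 / of_nat N) *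
      (\<Sum>k\<in>{- int M..int M}. cnj (dft_entry N k l) * F_M N M v k))"

definition l2norm :: "nat \<Rightarrow> (nat \<Rightarrow> complex) \<Rightarrow> real" where
  "l2norm N w = sqrt (\<Sum>i<N. (cmod (w i))\<^sup>2)"

definition circ_dist :: "nat \<Rightarrow> nat \<Rightarrow> nat \<Rightarrow> int" where
  "circ_dist N s s' = min \<bar>int s - int s'\<bar>
      (min \<bar>int s + int N - int s'\<bar> \<bar>int s - int N - int s'\<bar>)"

definition supp_vec :: "nat \<Rightarrow> (nat \<Rightarrow> real) \<Rightarrow> nat set" where
  "supp_vec N v = {i. i < N \<and> v i \<noteq> 0}"

definition min_sep :: "nat \<Rightarrow> nat \<Rightarrow> (nat \<Rightarrow> real) \<Rightarrow> bool" where
  "min_sep N M v = (\<forall>s\<in>supp_vec N v. \<forall>s'\<in>supp_vec N v. s \<noteq> s' \<longrightarrow>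
      real_of_int (circ_dist N s s') / real N \<ge> 2 / real M)"

end

theory Submission
  imports Defs "HOL-Analysis.L2_Norm" "HOL-Library.Real_Mod"
begin

(* Put u = D^-r (xt - x), so that xt - x = D^r u; the hypotheses give |u_i| <= delta for all i
   and |u_i| <= 2 (2N)^-r delta on the last r entries.  In Fourier space D_1 is multiplication
   by 1 - omega^k, of modulus at most 2 pi |k| / N, and D differs from D_1 only by the boundary
   value v_(N-1).  Hence for |k| <= M the coefficients of D_1^beta D^r u are those of u damped by
   (2 pi M / N)^(r + beta), up to an error controlled by the tiny tail of u.  Since the frequencies
   -M..M meet every residue class mod N at most 2M/N + 1 times, F_M and P_M are bounded on l^2 with
   constants of order 1 + M/N.  This settles the case 2M <= N; when 2M > N the crude pointwise
   bound |D_1^beta D^r u| <= 2^(r + beta) delta suffices, because then M/N > 1/2. *)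

section \<open>Discrete Fourier transform\<close>

definition dft_root :: "nat \<Rightarrow> int \<Rightarrow> complex" where
  "dft_root N k = cis (- 2 * pi * real_of_int k / real N)"

lemma dft_entry_eq_power: "dft_entry N k j = dft_root N k ^ j"
  by (simp add: dft_entry_def dft_root_def DeMoivre field_simps)

lemma dft_root_power_self:
  assumes "N > 0" shows "dft_root N k ^ N = 1"
proof -
  have "real N * (- 2 * pi * real_of_int k / real N) = 2 * pi * real_of_int (- k)"
    using assms by simp
  then show ?thesis
    unfolding dft_root_def DeMoivre by (simp only:) (rule cis_multiple_2pi, simp)
qed

lemma norm_1_minus_cis_le_abs: "cmod (1 - cis t) \<le> \<bar>t\<bar>"
proof -
  have "(cmod (1 - cis t))\<^sup>2 = (1 - cos t)\<^sup>2 + (sin t)\<^sup>2"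
    by (simp add: cmod_power2)
  also have "\<dots> = 2 - 2 * cos t"
    by (simp add: power2_eq_square algebra_simps sin_squared_eq)
  also have "\<dots> = 4 * (sin (t / 2))\<^sup>2"
    using cos_double_sin[of "t / 2"] by simp
  also have "\<dots> \<le> 4 * (t / 2)\<^sup>2"
    using abs_sin_x_le_abs_x[of "t / 2"] by (simp add: abs_le_square_iff[symmetric])
  also have "\<dots> = t\<^sup>2"
    by (simp add: power2_eq_square)
  finally show ?thesis
    by (simp add: abs_le_square_iff[symmetric])
qed

lemma norm_1_minus_dft_root_le_2: "cmod (1 - dft_root N k) \<le> 2"
  using norm_triangle_ineq4[of 1 "dft_root N k"] by (simp add: dft_root_def)

lemma norm_1_minus_dft_root_le:
  assumes "\<bar>k\<bar> \<le> int M"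
  shows "cmod (1 - dft_root N k) \<le> 2 * pi * real M / real N"
proof -
  have "cmod (1 - dft_root N k) \<le> 2 * pi * \<bar>real_of_int k\<bar> / real N"
    using norm_1_minus_cis_le_abs[of "- 2 * pi * real_of_int k / real N"]
    by (simp add: dft_root_def abs_mult)
  also have "\<dots> \<le> 2 * pi * real M / real N"
    using assms by (intro divide_right_mono mult_left_mono) auto
  finally show ?thesis .
qed

lemma dft_orthogonality:
  assumes "N > 0"
  shows "(\<Sum>l<N. cnj (dft_entry N k l) * dft_entry N k' l)
    = (if int N dvd k - k' then of_nat N else 0)"
proof -
  define w where "w = cis (2 * pi * real_of_int (k - k') / real N)"
  have entry_product: "cnj (dft_entry N k l) * dft_entry N k' l = w ^ l" for l
    by (simp add: w_def dft_entry_def DeMoivre cis_cnj cis_mult field_simps diff_divide_distrib)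
  have angle: "2 * pi * x / real N = y * (2 * pi) \<longleftrightarrow> x = y * real N" for x y :: real
    using assms pi_gt_zero by (auto simp: field_simps)
  have w_eq_1: "w = 1 \<longleftrightarrow> int N dvd k - k'"
  proof -
    have "real_of_int (k - k') = of_int n * real N \<longleftrightarrow> k - k' = int N * n" for n
      by (metis of_int_eq_iff of_int_mult of_int_of_nat_eq mult.commute)
    then show ?thesis
      unfolding w_def cis_eq_1_iff angle dvd_def by simp
  qed
  have "w ^ N = 1"
    using assms by (simp add: w_def DeMoivre)
  then show ?thesis
    by (simp add: entry_product w_eq_1[symmetric] sum_gp_strict)
qed

section \<open>Norm bounds for \<open>F_M\<close> and \<open>P_M\<close>\<close>

lemma card_congruent_frequencies_le:
  assumes "N > 0"
  shows "real (card {k' \<in> {- int M..int M}. int N dvd k - k'}) \<le> 2 * real M / real N + 1"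
proof -
  let ?S = "{k' \<in> {- int M..int M}. int N dvd k - k'}"
  let ?f = "\<lambda>k'. (k' + int M) div int N"
  define q where "q = (2 * int M) div int N"
  have "inj_on ?f ?S"
  proof
    fix a b assume a: "a \<in> ?S" and b: "b \<in> ?S" and "?f a = ?f b"
    moreover have "int N dvd (a + int M) - (b + int M)"
      using a b dvd_diff[of "int N" "k - b" "k - a"] by simp
    then have "(a + int M) mod int N = (b + int M) mod int N"
      by (simp only: mod_eq_dvd_iff)
    ultimately show "a = b"
      by (metis add_right_cancel div_mult_mod_eq)
  qed
  moreover have "?f ` ?S \<subseteq> {0..q}"
    using assms by (auto intro!: zdiv_mono1 simp: q_def pos_imp_zdiv_nonneg_iff)
  ultimately have "card ?S \<le> card {0..q}"
    by (intro card_inj_on_le) auto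
  moreover have "q \<ge> 0"
    using assms by (simp add: q_def pos_imp_zdiv_nonneg_iff)
  ultimately have "real (card ?S) \<le> real_of_int q + 1"
    by (simp add: of_nat_le_iff[symmetric, where 'a = real])
  also have "\<dots> \<le> 2 * real M / real N + 1"
    using real_of_int_div4[of "2 * int M" "int N"] by (simp add: q_def)
  finally show ?thesis .
qed

lemma norm_quadratic_form_le:
  fixes a :: "'k \<Rightarrow> complex" and g :: "'k \<Rightarrow> 'k \<Rightarrow> real"
  assumes sym: "\<And>k k'. g k k' = g k' k" and nonneg: "\<And>k k'. 0 \<le> g k k'"
    and row_sum: "\<And>k. k \<in> K \<Longrightarrow> (\<Sum>k'\<in>K. g k k') \<le> B"
  shows "cmod (\<Sum>k\<in>K. \<Sum>k'\<in>K. a k * cnj (a k') * of_real (g k k'))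
    \<le> B * (\<Sum>k\<in>K. (cmod (a k))\<^sup>2)"
proof -
  have "cmod (\<Sum>k\<in>K. \<Sum>k'\<in>K. a k * cnj (a k') * of_real (g k k'))
      \<le> (\<Sum>k\<in>K. \<Sum>k'\<in>K. cmod (a k * cnj (a k') * of_real (g k k')))"
    by (rule order_trans[OF norm_sum sum_mono[OF norm_sum]])
  also have "\<dots> = (\<Sum>k\<in>K. \<Sum>k'\<in>K. g k k' * (cmod (a k) * cmod (a k')))"
    by (simp add: norm_mult nonneg mult.commute)
  also have "\<dots> \<le> (\<Sum>k\<in>K. \<Sum>k'\<in>K. g k k' * (((cmod (a k))\<^sup>2 + (cmod (a k'))\<^sup>2) / 2))"
  proof (intro sum_mono mult_left_mono nonneg)
    fix k k'
    show "cmod (a k) * cmod (a k') \<le> ((cmod (a k))\<^sup>2 + (cmod (a k'))\<^sup>2) / 2"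
      using sum_squares_bound[of "cmod (a k)" "cmod (a k')"] by simp
  qed
  also have "\<dots> = ((\<Sum>k\<in>K. \<Sum>k'\<in>K. g k k' * (cmod (a k))\<^sup>2)
      + (\<Sum>k\<in>K. \<Sum>k'\<in>K. g k k' * (cmod (a k'))\<^sup>2)) / 2"
    by (simp add: sum.distrib[symmetric] sum_divide_distrib[symmetric] distrib_left)
  also have "(\<Sum>k\<in>K. \<Sum>k'\<in>K. g k k' * (cmod (a k'))\<^sup>2) = (\<Sum>k\<in>K. \<Sum>k'\<in>K. g k k' * (cmod (a k))\<^sup>2)"
    by (subst sum.swap) (simp add: sym)
  also have "((\<Sum>k\<in>K. \<Sum>k'\<in>K. g k k' * (cmod (a k))\<^sup>2) + (\<Sum>k\<in>K. \<Sum>k'\<in>K. g k k' * (cmod (a k))\<^sup>2)) / 2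
      = (\<Sum>k\<in>K. (\<Sum>k'\<in>K. g k k') * (cmod (a k))\<^sup>2)"
    by (simp add: sum_distrib_right)
  also have "\<dots> \<le> (\<Sum>k\<in>K. B * (cmod (a k))\<^sup>2)"
    by (intro sum_mono mult_right_mono row_sum) auto
  finally show ?thesis
    by (simp add: sum_distrib_left)
qed

lemma sum_sq_dft_synthesis_le:
  fixes a :: "int \<Rightarrow> complex"
  assumes "N > 0"
  shows "(\<Sum>l<N. (cmod (\<Sum>k\<in>{- int M..int M}. cnj (dft_entry N k l) * a k))\<^sup>2)
    \<le> real N * (2 * real M / real N + 1) * (\<Sum>k\<in>{- int M..int M}. (cmod (a k))\<^sup>2)"
proof -
  let ?K = "{- int M..int M}"
  define g where "g k k' = (if int N dvd k - k' then real N else 0)" for k k'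
  have "complex_of_real (\<Sum>l<N. (cmod (\<Sum>k\<in>?K. cnj (dft_entry N k l) * a k))\<^sup>2)
      = (\<Sum>l<N. (\<Sum>k\<in>?K. cnj (dft_entry N k l) * a k) * cnj (\<Sum>k\<in>?K. cnj (dft_entry N k l) * a k))"
    by (simp only: of_real_sum complex_norm_square)
  also have "\<dots> = (\<Sum>l<N. \<Sum>k\<in>?K. \<Sum>k'\<in>?K.
      a k * cnj (a k') * (cnj (dft_entry N k l) * dft_entry N k' l))"
    by (simp add: sum_product algebra_simps)
  also have "\<dots> = (\<Sum>k\<in>?K. \<Sum>k'\<in>?K.
      a k * cnj (a k') * (\<Sum>l<N. cnj (dft_entry N k l) * dft_entry N k' l))"
    by (simp add: sum_distrib_left sum.swap[where A = "{..<N}"])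
  also have "\<dots> = (\<Sum>k\<in>?K. \<Sum>k'\<in>?K. a k * cnj (a k') * of_real (g k k'))"
    by (intro sum.cong refl) (simp add: dft_orthogonality[OF assms] g_def)
  finally have expand: "(\<Sum>l<N. (cmod (\<Sum>k\<in>?K. cnj (dft_entry N k l) * a k))\<^sup>2)
      = cmod (\<Sum>k\<in>?K. \<Sum>k'\<in>?K. a k * cnj (a k') * of_real (g k k'))"
    by (metis (no_types, lifting) abs_of_nonneg norm_of_real sum_nonneg zero_le_power2)
  have row_sum: "(\<Sum>k'\<in>?K. g k k') \<le> real N * (2 * real M / real N + 1)" for k
  proof -
    have "(\<Sum>k'\<in>?K. g k k') = real N * real (card {k' \<in> ?K. int N dvd k - k'})"
      unfolding g_def by (simp add: sum.inter_filter[symmetric])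
    then show ?thesis
      using card_congruent_frequencies_le[OF assms] by (simp add: mult_left_mono)
  qed
  show ?thesis
    unfolding expand
    by (rule norm_quadratic_form_le[OF _ _ row_sum]) (auto simp: g_def dvd_diff_commute)
qed

lemma sum_sq_F_M_le:
  assumes "N > 0"
  shows "(\<Sum>k\<in>{- int M..int M}. (cmod (F_M N M v k))\<^sup>2)
    \<le> real N * (2 * real M / real N + 1) * (\<Sum>j<N. (v j)\<^sup>2)"
proof -
  let ?K = "{- int M..int M}"
  let ?c = "real N * (2 * real M / real N + 1)"
  define S where "S = (\<Sum>k\<in>?K. (cmod (F_M N M v k))\<^sup>2)"
  define V where "V = (\<Sum>j<N. (v j)\<^sup>2)"
  define g where "g j = (\<Sum>k\<in>?K. cnj (dft_entry N k j) * F_M N M v k)" for j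
  define G where "G = (\<Sum>j<N. (cmod (g j))\<^sup>2)"
  have "complex_of_real S = (\<Sum>k\<in>?K. cnj (F_M N M v k) * F_M N M v k)"
    unfolding S_def by (simp only: of_real_sum complex_norm_square mult.commute)
  also have "\<dots> = (\<Sum>k\<in>?K. \<Sum>j<N. cnj (F_M N M v k) * (dft_entry N k j * v j))"
    by (simp add: F_M_def sum_distrib_left)
  also have "\<dots> = (\<Sum>j<N. of_real (v j) * cnj (g j))"
    unfolding g_def by (subst sum.swap) (simp add: sum_distrib_left algebra_simps)
  finally have S_eq: "complex_of_real S = (\<Sum>j<N. of_real (v j) * cnj (g j))" .
  have S_nonneg: "S \<ge> 0"
    by (simp add: S_def sum_nonneg)
  \<comment> \<open>By Cauchy--Schwarz and the synthesis bound, \<open>S\<^sup>2 \<le> V * G \<le> V * ?c * S\<close>.\<close>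
  have "S \<le> (\<Sum>j<N. \<bar>v j\<bar> * \<bar>cmod (g j)\<bar>)"
    using norm_sum[of "\<lambda>j. of_real (v j) * cnj (g j)" "{..<N}"] S_nonneg
    by (simp add: S_eq[symmetric] norm_mult)
  also have "\<dots> \<le> sqrt V * sqrt G"
    using L2_set_mult_ineq[of v "\<lambda>j. cmod (g j)" "{..<N}"] by (simp add: L2_set_def V_def G_def)
  finally have S_le: "S \<le> sqrt V * sqrt G" .
  have "S\<^sup>2 \<le> (sqrt V * sqrt G)\<^sup>2"
    using S_le S_nonneg by (rule power_mono)
  also have "\<dots> = V * G"
    by (simp add: V_def G_def power_mult_distrib sum_nonneg)
  also have "\<dots> \<le> V * (?c * S)"
    using sum_sq_dft_synthesis_le[OF assms, where a = "F_M N M v"]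
    by (intro mult_left_mono) (simp_all add: G_def g_def S_def V_def sum_nonneg)
  finally have "S * S \<le> (?c * V) * S"
    by (simp add: power2_eq_square algebra_simps)
  then have "S \<le> ?c * V"
    using S_nonneg by (cases "S = 0") (auto simp: V_def sum_nonneg mult_le_cancel_right)
  then show ?thesis
    by (simp add: S_def V_def)
qed

lemma l2norm_sq: "(l2norm N w)\<^sup>2 = (\<Sum>i<N. (cmod (w i))\<^sup>2)"
  by (simp add: l2norm_def sum_nonneg)

lemma l2norm_P_M_sq_le:
  assumes "N > 0"
  shows "(l2norm N (P_M N M w))\<^sup>2
    \<le> (2 * real M / real N + 1) / real N * (\<Sum>k\<in>{- int M..int M}. (cmod (F_M N M w k))\<^sup>2)"
proof -
  have "(l2norm N (P_M N M w))\<^sup>2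
      = (\<Sum>l<N. (1 / real N)\<^sup>2
          * (cmod (\<Sum>k\<in>{- int M..int M}. cnj (dft_entry N k l) * F_M N M w k))\<^sup>2)"
    unfolding l2norm_sq P_M_def
    by (intro sum.cong refl, simp only: norm_mult power_mult_distrib) (simp add: norm_divide)
  also have "\<dots> = (1 / real N)\<^sup>2
      * (\<Sum>l<N. (cmod (\<Sum>k\<in>{- int M..int M}. cnj (dft_entry N k l) * F_M N M w k))\<^sup>2)"
    by (rule sum_distrib_left[symmetric])
  also have "\<dots> \<le> (1 / real N)\<^sup>2 * (real N * (2 * real M / real N + 1)
      * (\<Sum>k\<in>{- int M..int M}. (cmod (F_M N M w k))\<^sup>2))"
    by (intro mult_left_mono sum_sq_dft_synthesis_le[OF assms]) simp
  also have "\<dots> = (2 * real M / real N + 1) / real N * (\<Sum>k\<in>{- int M..int M}. (cmod (F_M N M w k))\<^sup>2)"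
    using assms by (simp add: power2_eq_square)
  finally show ?thesis .
qed

lemma l2norm_P_M_sq_le_sum_sq:
  assumes "N > 0"
  shows "(l2norm N (P_M N M w))\<^sup>2 \<le> (2 * real M / real N + 1)\<^sup>2 * (\<Sum>j<N. (w j)\<^sup>2)"
proof -
  define c where "c = 2 * real M / real N + 1"
  have "(l2norm N (P_M N M w))\<^sup>2 \<le> c / real N * (real N * c * (\<Sum>j<N. (w j)\<^sup>2))"
    using l2norm_P_M_sq_le[OF assms] sum_sq_F_M_le[OF assms]
    unfolding c_def by (rule order_trans[OF _ mult_left_mono]) simp
  also have "\<dots> = c\<^sup>2 * (\<Sum>j<N. (w j)\<^sup>2)"
    using assms by (simp add: power2_eq_square)
  finally show ?thesis
    unfolding c_def .
qed

section \<open>Difference operators\<close>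

lemma F_M_Dmat:
  assumes "N > 0"
  shows "F_M N M (Dmat N v) k = (1 - dft_root N k) * F_M N M v k + v (N - 1)"
proof -
  obtain n where N: "N = Suc n"
    using assms by (cases N) auto
  let ?z = "dft_root N k"
  have shifted: "(\<Sum>j<N. ?z ^ j * of_real (if j = 0 then 0 else v (j - 1)))
      = ?z * (\<Sum>j<n. ?z ^ j * of_real (v j))"
    unfolding N sum.lessThan_Suc_shift by (simp add: sum_distrib_left algebra_simps)
  have split_last: "F_M N M v k = (\<Sum>j<n. ?z ^ j * of_real (v j)) + ?z ^ n * v n"
    unfolding F_M_def dft_entry_eq_power N by simp
  have "F_M N M (Dmat N v) k
      = F_M N M v k - (\<Sum>j<N. ?z ^ j * of_real (if j = 0 then 0 else v (j - 1)))"
    unfolding F_M_def Dmat_def dft_entry_eq_power by (simp add: sum_subtractf algebra_simps)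
  also have "\<dots> = (1 - ?z) * F_M N M v k + v (N - 1)"
    using dft_root_power_self[OF assms, of k]
    unfolding shifted split_last by (simp add: N algebra_simps)
  finally show ?thesis .
qed

lemma F_M_D1mat:
  assumes "N > 0"
  shows "F_M N M (D1mat N v) k = (1 - dft_root N k) * F_M N M v k"
proof -
  have D1_eq: "D1mat N v j = Dmat N v j - (if j = 0 then v (N - 1) else 0)" if "j < N" for j
    using that assms by (cases j) (simp_all add: D1mat_def Dmat_def)
  have "F_M N M (D1mat N v) k = F_M N M (Dmat N v) k
      - (\<Sum>j<N. if j = 0 then of_real (v (N - 1)) else 0)"
    unfolding F_M_def sum_subtractf[symmetric]
    by (intro sum.cong) (auto simp: D1_eq dft_entry_eq_power algebra_simps)
  then show ?thesis
    using assms by (simp add: F_M_Dmat)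
qed

lemma F_M_D1mat_pow:
  assumes "N > 0"
  shows "F_M N M ((D1mat N ^^ n) v) k = (1 - dft_root N k) ^ n * F_M N M v k"
  by (induction n) (simp_all add: F_M_D1mat[OF assms])

lemma norm_F_M_Dmat_pow_sub_le:
  assumes "N > 0" and boundary: "\<And>m. m < n \<Longrightarrow> \<bar>(Dmat N ^^ m) u (N - 1)\<bar> \<le> b"
  shows "cmod (F_M N M ((Dmat N ^^ n) u) k - (1 - dft_root N k) ^ n * F_M N M u k)
    \<le> (2 ^ n - 1) * b"
  using boundary
proof (induction n)
  case 0
  then show ?case by simp
next
  case (Suc n)
  let ?z = "1 - dft_root N k"
  let ?err = "F_M N M ((Dmat N ^^ n) u) k - ?z ^ n * F_M N M u k"
  have "F_M N M ((Dmat N ^^ Suc n) u) k - ?z ^ Suc n * F_M N M u k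
      = ?z * ?err + (Dmat N ^^ n) u (N - 1)"
    by (simp add: F_M_Dmat[OF assms(1)] algebra_simps)
  then have "cmod (F_M N M ((Dmat N ^^ Suc n) u) k - ?z ^ Suc n * F_M N M u k)
      \<le> cmod ?z * cmod ?err + \<bar>(Dmat N ^^ n) u (N - 1)\<bar>"
    using norm_triangle_ineq[of "?z * ?err" "of_real ((Dmat N ^^ n) u (N - 1))"]
    by (simp only: norm_mult norm_of_real)
  also have "\<dots> \<le> 2 * ((2 ^ n - 1) * b) + b"
    using Suc by (intro add_mono mult_mono norm_1_minus_dft_root_le_2) auto
  finally show ?case
    by (simp add: algebra_simps)
qed

lemma Dmat_pow_Dinv_pow: "(Dmat N ^^ r) ((Dinv N ^^ r) v) = v"
proof -
  have Dmat_Dinv: "Dmat N (Dinv N w) = w" for w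
  proof
    show "Dmat N (Dinv N w) i = w i" for i
      by (cases i) (simp_all add: Dmat_def Dinv_def)
  qed
  show ?thesis
    by (induction r arbitrary: v) (simp_all add: Dmat_Dinv funpow_swap1)
qed

lemma Dinv_pow_diff:
  "(Dinv N ^^ r) (\<lambda>j. f j - g j) = (\<lambda>i. (Dinv N ^^ r) f i - (Dinv N ^^ r) g i)"
  by (induction r) (simp_all add: Dinv_def sum_subtractf)

lemma abs_D1mat_pow_le:
  assumes "\<And>i. i < N \<Longrightarrow> \<bar>v i\<bar> \<le> B" and "i < N"
  shows "\<bar>(D1mat N ^^ n) v i\<bar> \<le> 2 ^ n * B"
  using assms(2)
proof (induction n arbitrary: i)
  case 0
  then show ?case using assms(1) by simp
next
  case (Suc n)
  have "(i + N - 1) mod N < N"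
    using Suc.prems by simp
  then have "\<bar>(D1mat N ^^ n) v i\<bar> + \<bar>(D1mat N ^^ n) v ((i + N - 1) mod N)\<bar> \<le> 2 ^ n * B + 2 ^ n * B"
    using Suc by (intro add_mono) auto
  moreover have "(D1mat N ^^ Suc n) v i = (D1mat N ^^ n) v i - (D1mat N ^^ n) v ((i + N - 1) mod N)"
    by (simp only: funpow.simps comp_apply D1mat_def[of N "(D1mat N ^^ n) v"])
  moreover have "2 ^ n * B + 2 ^ n * B = 2 ^ Suc n * B"
    by simp
  ultimately show ?case
    using abs_triangle_ineq4[of "(D1mat N ^^ n) v i" "(D1mat N ^^ n) v ((i + N - 1) mod N)"]
    by linarith
qed

(* For a = 0 the truncated subtraction makes the condition a <= i - m vacuous. *)
lemma abs_Dmat_pow_le: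
  assumes "\<And>i. i < N \<Longrightarrow> a \<le> i \<Longrightarrow> \<bar>u i\<bar> \<le> \<eta>" and "i < N" and "a \<le> i - m"
  shows "\<bar>(Dmat N ^^ m) u i\<bar> \<le> 2 ^ m * \<eta>"
  using assms(2,3)
proof (induction m arbitrary: i)
  case 0
  then show ?case using assms(1) by simp
next
  case (Suc m)
  have current: "\<bar>(Dmat N ^^ m) u i\<bar> \<le> 2 ^ m * \<eta>"
    using Suc by simp
  have previous: "\<bar>if i = 0 then 0 else (Dmat N ^^ m) u (i - 1)\<bar> \<le> 2 ^ m * \<eta>"
  proof (cases "i = 0")
    case True
    then show ?thesis
      using current abs_ge_zero order_trans by fastforce
  next
    case False
    moreover have "i - 1 < N" "a \<le> i - 1 - m"
      using Suc.prems by linarith+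
    ultimately show ?thesis
      using Suc.IH[of "i - 1"] by simp
  qed
  have "(Dmat N ^^ Suc m) u i = (Dmat N ^^ m) u i - (if i = 0 then 0 else (Dmat N ^^ m) u (i - 1))"
    by (simp only: funpow.simps comp_apply Dmat_def[of N "(Dmat N ^^ m) u"])
  moreover have "2 ^ m * \<eta> + 2 ^ m * \<eta> = 2 ^ Suc m * \<eta>"
    by simp
  ultimately show ?case
    using current previous
      abs_triangle_ineq4[of "(Dmat N ^^ m) u i" "if i = 0 then 0 else (Dmat N ^^ m) u (i - 1)"]
    by linarith
qed

section \<open>The low-pass error estimate\<close>

lemma sum_sq_le_of_abs_le:
  fixes w :: "nat \<Rightarrow> real"
  assumes "\<And>i. i < N \<Longrightarrow> \<bar>w i\<bar> \<le> B"
  shows "(\<Sum>j<N. (w j)\<^sup>2) \<le> real N * B\<^sup>2"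
proof -
  have "(\<Sum>j<N. (w j)\<^sup>2) \<le> (\<Sum>j<N. B\<^sup>2)"
    using assms
    by (intro sum_mono) (simp add: abs_le_square_iff[symmetric] order_trans[OF _ abs_ge_self])
  then show ?thesis
    by simp
qed

lemma sq_le_four_pow_mult_pow:
  fixes t :: real
  assumes "1 \<le> 2 * t" and "s \<ge> 1"
  shows "t\<^sup>2 \<le> 4 ^ (s - 1) * t ^ (2 * s)"
proof -
  obtain s' where s: "s = Suc s'"
    using assms(2) by (cases s) auto
  have "1 \<le> (2 * t) ^ (2 * s')"
    using assms(1) by (rule one_le_power)
  then have "t\<^sup>2 \<le> (2 * t) ^ (2 * s') * t\<^sup>2"
    using mult_right_mono[of 1 "(2 * t) ^ (2 * s')" "t\<^sup>2"] by simp
  also have "\<dots> = 4 ^ (s - 1) * t ^ (2 * s)"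
    by (simp add: s power_mult_distrib power_mult power_add power2_eq_square)
  finally show ?thesis .
qed

lemma frequency_count_div_pow_le:
  assumes "N > 0" and "M > 0" and "r \<ge> 1"
  shows "(2 * real M + 1) / real N * (1 / real N) ^ (2 * r)
    \<le> 3 * (real M / real N) ^ (2 * r) * real N"
proof -
  have "real M \<le> real M ^ (2 * r)"
    using assms(2,3) by (simp add: self_le_power)
  also have "\<dots> \<le> real M ^ (2 * r) * (real N)\<^sup>2"
    using assms(1) mult_left_mono[of 1 "(real N)\<^sup>2" "real M ^ (2 * r)"] by simp
  finally have "(2 * real M + 1) \<le> 3 * real M ^ (2 * r) * (real N)\<^sup>2"
    using assms(2) by linarith
  then have "(2 * real M + 1) * real N ^ (2 * r)
      \<le> 3 * real M ^ (2 * r) * (real N)\<^sup>2 * real N ^ (2 * r)"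
    by (rule mult_right_mono) simp
  then show ?thesis
    using assms(1) by (simp add: field_simps power_divide power2_eq_square)
qed

lemma l2norm_P_M_sq_le_of_abs_le_large_M:
  assumes "N > 0" and "real N < 2 * real M" and "s \<ge> 1"
    and "\<And>i. i < N \<Longrightarrow> \<bar>w i\<bar> \<le> 2 ^ s * \<delta>"
  shows "(l2norm N (P_M N M w))\<^sup>2 \<le> 4 ^ (2 * s + 1) * (real M / real N) ^ (2 * s) * real N * \<delta>\<^sup>2"
proof -
  define t where "t = real M / real N"
  have "1 < 2 * t"
    using assms(1,2) by (simp add: t_def field_simps)
  then have "2 * real M / real N + 1 \<le> 4 * t"
    by (simp add: t_def)
  moreover have "(\<Sum>j<N. (w j)\<^sup>2) \<le> real N * (2 ^ s * \<delta>)\<^sup>2"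
    using assms(4) by (rule sum_sq_le_of_abs_le)
  ultimately have "(2 * real M / real N + 1)\<^sup>2 * (\<Sum>j<N. (w j)\<^sup>2)
      \<le> (4 * t)\<^sup>2 * (real N * (2 ^ s * \<delta>)\<^sup>2)"
    by (intro mult_mono power_mono) (auto simp: sum_nonneg)
  with l2norm_P_M_sq_le_sum_sq[OF assms(1)]
  have "(l2norm N (P_M N M w))\<^sup>2 \<le> (4 * t)\<^sup>2 * (real N * (2 ^ s * \<delta>)\<^sup>2)"
    by (rule order_trans)
  also have "\<dots> = 4 ^ (s + 2) * t\<^sup>2 * real N * \<delta>\<^sup>2"
    using power_mult_distrib[of "2::real" 2 s]
    by (simp add: power_mult_distrib power_add power2_eq_square)
  also have "\<dots> \<le> 4 ^ (s + 2) * (4 ^ (s - 1) * t ^ (2 * s)) * real N * \<delta>\<^sup>2"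
    using sq_le_four_pow_mult_pow \<open>1 < 2 * t\<close> assms(3)
    by (intro mult_right_mono mult_left_mono) auto
  also have "\<dots> = 4 ^ (s + 2 + (s - 1)) * t ^ (2 * s) * real N * \<delta>\<^sup>2"
    by (simp add: power_add)
  also have "s + 2 + (s - 1) = 2 * s + 1"
    using assms(3) by arith
  finally show ?thesis
    unfolding t_def .
qed

lemma norm_F_M_D1mat_pow_Dmat_pow_le:
  assumes "N > 0" and "r \<ge> 1" and "\<bar>k\<bar> \<le> int M"
    and tail: "\<And>i. i < N \<Longrightarrow> N - r \<le> i \<Longrightarrow> \<bar>u i\<bar> \<le> \<eta>"
  shows "cmod (F_M N M ((D1mat N ^^ \<beta>) ((Dmat N ^^ r) u)) k)
    \<le> (2 * pi * real M / real N) ^ \<beta>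
      * ((2 * pi * real M / real N) ^ r * cmod (F_M N M u k) + 4 ^ r * \<eta>)"
proof -
  let ?\<rho> = "2 * pi * real M / real N"
  have symbol_le: "cmod (1 - dft_root N k) \<le> ?\<rho>"
    using assms(3) by (rule norm_1_minus_dft_root_le)
  have "\<eta> \<ge> 0"
    using tail[of "N - 1"] assms(1,2) by fastforce
  have boundary: "\<bar>(Dmat N ^^ m) u (N - 1)\<bar> \<le> 2 ^ r * \<eta>" if "m < r" for m
  proof -
    have "\<bar>(Dmat N ^^ m) u (N - 1)\<bar> \<le> 2 ^ m * \<eta>"
      by (rule abs_Dmat_pow_le[where a = "N - r"]) (use tail assms(1) that in auto)
    also have "\<dots> \<le> 2 ^ r * \<eta>"
      using \<open>\<eta> \<ge> 0\<close> that by (intro mult_right_mono power_increasing) auto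
    finally show ?thesis .
  qed
  have "(2 ^ r - 1) * (2 ^ r * \<eta>) \<le> 4 ^ r * \<eta>"
    using \<open>\<eta> \<ge> 0\<close> by (simp add: power_mult_distrib[symmetric] algebra_simps)
  then have "cmod (F_M N M ((Dmat N ^^ r) u) k)
      \<le> cmod ((1 - dft_root N k) ^ r * F_M N M u k) + 4 ^ r * \<eta>"
    using norm_F_M_Dmat_pow_sub_le[OF assms(1) boundary, of r M k]
      norm_triangle_ineq2[of "F_M N M ((Dmat N ^^ r) u) k" "(1 - dft_root N k) ^ r * F_M N M u k"]
    by linarith
  also have "\<dots> \<le> ?\<rho> ^ r * cmod (F_M N M u k) + 4 ^ r * \<eta>"
    unfolding norm_mult norm_power
    by (intro add_right_mono mult_right_mono power_mono symbol_le) auto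
  finally have "cmod (F_M N M ((Dmat N ^^ r) u) k) \<le> \<dots>" .
  then show ?thesis
    unfolding F_M_D1mat_pow[OF assms(1)] norm_mult norm_power
    by (intro mult_mono power_mono symbol_le) auto
qed

lemma sum_sq_F_M_D1mat_pow_Dmat_pow_le:
  assumes "N > 0" and "r \<ge> 1" and "\<And>i. i < N \<Longrightarrow> N - r \<le> i \<Longrightarrow> \<bar>u i\<bar> \<le> \<eta>"
  shows "(\<Sum>k\<in>{- int M..int M}. (cmod (F_M N M ((D1mat N ^^ \<beta>) ((Dmat N ^^ r) u)) k))\<^sup>2)
    \<le> 2 * (2 * pi * real M / real N) ^ (2 * (r + \<beta>)) * (\<Sum>k\<in>{- int M..int M}. (cmod (F_M N M u k))\<^sup>2)
      + 2 * (2 * pi * real M / real N) ^ (2 * \<beta>) * (2 * real M + 1) * (4 ^ r * \<eta>)\<^sup>2"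
proof -
  let ?\<rho> = "2 * pi * real M / real N"
  have pointwise: "(cmod (F_M N M ((D1mat N ^^ \<beta>) ((Dmat N ^^ r) u)) k))\<^sup>2
      \<le> 2 * ?\<rho> ^ (2 * (r + \<beta>)) * (cmod (F_M N M u k))\<^sup>2 + 2 * ?\<rho> ^ (2 * \<beta>) * (4 ^ r * \<eta>)\<^sup>2"
    if "k \<in> {- int M..int M}" for k
  proof -
    have "cmod (F_M N M ((D1mat N ^^ \<beta>) ((Dmat N ^^ r) u)) k)
        \<le> ?\<rho> ^ \<beta> * (?\<rho> ^ r * cmod (F_M N M u k) + 4 ^ r * \<eta>)"
      by (intro norm_F_M_D1mat_pow_Dmat_pow_le) (use assms that in auto)
    then have "(cmod (F_M N M ((D1mat N ^^ \<beta>) ((Dmat N ^^ r) u)) k))\<^sup>2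
        \<le> (?\<rho> ^ \<beta>)\<^sup>2 * (?\<rho> ^ r * cmod (F_M N M u k) + 4 ^ r * \<eta>)\<^sup>2"
      by (simp add: power_mult_distrib[symmetric] power_mono)
    also have "\<dots> \<le> (?\<rho> ^ \<beta>)\<^sup>2 * (2 * (?\<rho> ^ r * cmod (F_M N M u k))\<^sup>2 + 2 * (4 ^ r * \<eta>)\<^sup>2)"
      using sum_squares_bound[of "?\<rho> ^ r * cmod (F_M N M u k)" "4 ^ r * \<eta>"]
      by (intro mult_left_mono) (simp_all add: power2_sum)
    finally show ?thesis
      by (simp add: power_mult_distrib power_add power_mult[symmetric] algebra_simps)
  qed
  have "(\<Sum>k\<in>{- int M..int M}. (cmod (F_M N M ((D1mat N ^^ \<beta>) ((Dmat N ^^ r) u)) k))\<^sup>2)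
      \<le> (\<Sum>k\<in>{- int M..int M}. 2 * ?\<rho> ^ (2 * (r + \<beta>)) * (cmod (F_M N M u k))\<^sup>2
          + 2 * ?\<rho> ^ (2 * \<beta>) * (4 ^ r * \<eta>)\<^sup>2)"
    by (rule sum_mono) (rule pointwise)
  also have "\<dots> = 2 * ?\<rho> ^ (2 * (r + \<beta>)) * (\<Sum>k\<in>{- int M..int M}. (cmod (F_M N M u k))\<^sup>2)
      + 2 * ?\<rho> ^ (2 * \<beta>) * (2 * real M + 1) * (4 ^ r * \<eta>)\<^sup>2"
    by (simp add: sum.distrib sum_distrib_left)
  finally show ?thesis .
qed

lemma l2norm_P_M_D1mat_pow_Dmat_pow_sq_le_tail:
  assumes "N > 0" and "2 * M \<le> N" and "r \<ge> 1"
    and "\<And>i. i < N \<Longrightarrow> \<bar>u i\<bar> \<le> \<delta>" and "\<And>i. i < N \<Longrightarrow> N - r \<le> i \<Longrightarrow> \<bar>u i\<bar> \<le> \<eta>"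
  shows "(l2norm N (P_M N M ((D1mat N ^^ \<beta>) ((Dmat N ^^ r) u))))\<^sup>2
    \<le> 8 * (2 * pi * real M / real N) ^ (2 * (r + \<beta>)) * real N * \<delta>\<^sup>2
      + 4 * (2 * pi * real M / real N) ^ (2 * \<beta>) * ((2 * real M + 1) / real N) * (4 ^ r * \<eta>)\<^sup>2"
proof -
  let ?\<rho> = "2 * pi * real M / real N"
  let ?K = "{- int M..int M}"
  have c_le: "2 * real M / real N + 1 \<le> 2"
    using assms(1,2) by (simp add: field_simps)
  have "(\<Sum>k\<in>?K. (cmod (F_M N M u k))\<^sup>2) \<le> real N * (2 * real M / real N + 1) * (\<Sum>j<N. (u j)\<^sup>2)"
    using assms(1) by (rule sum_sq_F_M_le)
  also have "\<dots> \<le> real N * 2 * (real N * \<delta>\<^sup>2)"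
    using c_le sum_sq_le_of_abs_le[of N u \<delta>] assms(4)
    by (intro mult_mono mult_left_mono) (auto simp: sum_nonneg)
  finally have low_freq: "(\<Sum>k\<in>?K. (cmod (F_M N M u k))\<^sup>2) \<le> 2 * (real N)\<^sup>2 * \<delta>\<^sup>2"
    by (simp add: power2_eq_square)
  have "(l2norm N (P_M N M ((D1mat N ^^ \<beta>) ((Dmat N ^^ r) u))))\<^sup>2
      \<le> (2 * real M / real N + 1) / real N
        * (\<Sum>k\<in>?K. (cmod (F_M N M ((D1mat N ^^ \<beta>) ((Dmat N ^^ r) u)) k))\<^sup>2)"
    using assms(1) by (rule l2norm_P_M_sq_le)
  also have "\<dots> \<le> 2 / real N * (2 * ?\<rho> ^ (2 * (r + \<beta>)) * (\<Sum>k\<in>?K. (cmod (F_M N M u k))\<^sup>2)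
      + 2 * ?\<rho> ^ (2 * \<beta>) * (2 * real M + 1) * (4 ^ r * \<eta>)\<^sup>2)"
    using c_le sum_sq_F_M_D1mat_pow_Dmat_pow_le[OF assms(1,3), of u \<eta> M \<beta>] assms(5)
    by (intro mult_mono divide_right_mono) (auto simp: sum_nonneg)
  also have "\<dots> \<le> 2 / real N * (2 * ?\<rho> ^ (2 * (r + \<beta>)) * (2 * (real N)\<^sup>2 * \<delta>\<^sup>2)
      + 2 * ?\<rho> ^ (2 * \<beta>) * (2 * real M + 1) * (4 ^ r * \<eta>)\<^sup>2)"
    using low_freq by (intro mult_left_mono add_right_mono) auto
  also have "\<dots> = 8 * ?\<rho> ^ (2 * (r + \<beta>)) * real N * \<delta>\<^sup>2
      + 4 * ?\<rho> ^ (2 * \<beta>) * ((2 * real M + 1) / real N) * (4 ^ r * \<eta>)\<^sup>2"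
    using assms(1) by (simp add: field_simps power2_eq_square)
  finally show ?thesis .
qed

lemma l2norm_P_M_D1mat_pow_Dmat_pow_sq_le_small_M:
  assumes "N > 0" and "M > 0" and "2 * M \<le> N" and "r \<ge> 1"
    and bulk: "\<And>i. i < N \<Longrightarrow> \<bar>u i\<bar> \<le> \<delta>"
    and tail: "\<And>i. i < N \<Longrightarrow> N - r \<le> i \<Longrightarrow> \<bar>u i\<bar> \<le> 2 * (1 / (2 * real N)) ^ r * \<delta>"
  shows "(l2norm N (P_M N M ((D1mat N ^^ \<beta>) ((Dmat N ^^ r) u))))\<^sup>2
    \<le> (8 * (2 * pi) ^ (2 * (r + \<beta>)) + 48 * 4 ^ r * (2 * pi) ^ (2 * \<beta>))
      * (real M / real N) ^ (2 * (r + \<beta>)) * real N * \<delta>\<^sup>2"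
proof -
  define t where "t = real M / real N"
  have "(l2norm N (P_M N M ((D1mat N ^^ \<beta>) ((Dmat N ^^ r) u))))\<^sup>2
      \<le> 8 * (2 * pi * real M / real N) ^ (2 * (r + \<beta>)) * real N * \<delta>\<^sup>2
        + 4 * (2 * pi * real M / real N) ^ (2 * \<beta>) * ((2 * real M + 1) / real N)
          * (4 ^ r * (2 * (1 / (2 * real N)) ^ r * \<delta>))\<^sup>2"
    by (rule l2norm_P_M_D1mat_pow_Dmat_pow_sq_le_tail) (use assms in auto)
  also have "(4 ^ r * (2 * (1 / (2 * real N)) ^ r * \<delta>))\<^sup>2
      = 4 * 4 ^ r * (1 / real N) ^ (2 * r) * \<delta>\<^sup>2"
    using power_mult_distrib[of "2::real" 2 r]
    by (simp add: power_mult_distrib power_mult power2_eq_square field_simps)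
  also have "2 * pi * real M / real N = 2 * pi * t"
    by (simp add: t_def)
  also have "8 * (2 * pi * t) ^ (2 * (r + \<beta>)) * real N * \<delta>\<^sup>2
        + 4 * (2 * pi * t) ^ (2 * \<beta>) * ((2 * real M + 1) / real N)
          * (4 * 4 ^ r * (1 / real N) ^ (2 * r) * \<delta>\<^sup>2)
      = 8 * (2 * pi) ^ (2 * (r + \<beta>)) * t ^ (2 * (r + \<beta>)) * real N * \<delta>\<^sup>2
        + 16 * 4 ^ r * (2 * pi) ^ (2 * \<beta>) * t ^ (2 * \<beta>) * \<delta>\<^sup>2
          * ((2 * real M + 1) / real N * (1 / real N) ^ (2 * r))"
    by (simp add: power_mult_distrib algebra_simps)
  also have "\<dots> \<le> 8 * (2 * pi) ^ (2 * (r + \<beta>)) * t ^ (2 * (r + \<beta>)) * real N * \<delta>\<^sup>2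
        + 16 * 4 ^ r * (2 * pi) ^ (2 * \<beta>) * t ^ (2 * \<beta>) * \<delta>\<^sup>2 * (3 * t ^ (2 * r) * real N)"
    using frequency_count_div_pow_le[OF assms(1,2,4)]
    by (intro add_left_mono mult_left_mono) (auto simp: t_def)
  also have "\<dots> = (8 * (2 * pi) ^ (2 * (r + \<beta>)) + 48 * 4 ^ r * (2 * pi) ^ (2 * \<beta>))
      * t ^ (2 * (r + \<beta>)) * real N * \<delta>\<^sup>2"
    by (simp add: power_add algebra_simps)
  finally show ?thesis
    unfolding t_def .
qed

lemma l2norm_P_M_D1mat_pow_Dmat_pow_sq_le_large_M:
  assumes "N > 0" and "real N < 2 * real M" and "r \<ge> 1"
    and bulk: "\<And>i. i < N \<Longrightarrow> \<bar>u i\<bar> \<le> \<delta>"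
  shows "(l2norm N (P_M N M ((D1mat N ^^ \<beta>) ((Dmat N ^^ r) u))))\<^sup>2
    \<le> 4 ^ (2 * (r + \<beta>) + 1) * (real M / real N) ^ (2 * (r + \<beta>)) * real N * \<delta>\<^sup>2"
proof (rule l2norm_P_M_sq_le_of_abs_le_large_M)
  show "\<bar>(D1mat N ^^ \<beta>) ((Dmat N ^^ r) u) i\<bar> \<le> 2 ^ (r + \<beta>) * \<delta>" if "i < N" for i
  proof -
    have "\<bar>(Dmat N ^^ r) u j\<bar> \<le> 2 ^ r * \<delta>" if "j < N" for j
      by (rule abs_Dmat_pow_le[where a = 0]) (use bulk that in auto)
    then show ?thesis
      using abs_D1mat_pow_le[of N "(Dmat N ^^ r) u" "2 ^ r * \<delta>" i \<beta>] \<open>i < N\<close>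
      by (simp add: power_add mult_ac)
  qed
qed (use assms in auto)

(* The first two summands come from the case 2M <= N, the last one from 2M > N. *)
definition lowpass_error_const :: "nat \<Rightarrow> nat \<Rightarrow> real" where
  "lowpass_error_const r \<beta> = sqrt (8 * (2 * pi) ^ (2 * (r + \<beta>)) + 48 * 4 ^ r * (2 * pi) ^ (2 * \<beta>)
    + 4 ^ (2 * (r + \<beta>) + 1))"

lemma l2norm_P_M_D1mat_pow_Dmat_pow_le:
  assumes "N > 0" and "M > 0" and "r \<ge> 1"
    and bulk: "\<And>i. i < N \<Longrightarrow> \<bar>u i\<bar> \<le> \<delta>"
    and tail: "\<And>i. i < N \<Longrightarrow> N - r \<le> i \<Longrightarrow> \<bar>u i\<bar> \<le> 2 * (1 / (2 * real N)) ^ r * \<delta>"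
  shows "l2norm N (P_M N M ((D1mat N ^^ \<beta>) ((Dmat N ^^ r) u)))
    \<le> lowpass_error_const r \<beta> * (real M / real N) ^ (r + \<beta>) * sqrt (real N) * \<delta>"
proof -
  define t where "t = real M / real N"
  define K1 where "K1 = 8 * (2 * pi) ^ (2 * (r + \<beta>)) + 48 * 4 ^ r * (2 * pi) ^ (2 * \<beta>)"
  define K2 :: real where "K2 = 4 ^ (2 * (r + \<beta>) + 1)"
  have "\<delta> \<ge> 0"
    using bulk[of 0] assms(1) by fastforce
  let ?X = "t ^ (2 * (r + \<beta>)) * real N * \<delta>\<^sup>2"
  have "K1 * ?X \<ge> 0" "K2 * ?X \<ge> 0"
    by (simp_all add: K1_def K2_def t_def)
  have sq: "(l2norm N (P_M N M ((D1mat N ^^ \<beta>) ((Dmat N ^^ r) u))))\<^sup>2 \<le> (K1 + K2) * ?X"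
  proof (cases "2 * M \<le> N")
    case True
    then have "(l2norm N (P_M N M ((D1mat N ^^ \<beta>) ((Dmat N ^^ r) u))))\<^sup>2 \<le> K1 * ?X"
      unfolding K1_def t_def mult.assoc[symmetric]
      by (intro l2norm_P_M_D1mat_pow_Dmat_pow_sq_le_small_M) (use assms in auto)
    then show ?thesis
      using \<open>K2 * ?X \<ge> 0\<close> by (simp add: distrib_right)
  next
    case False
    then have "(l2norm N (P_M N M ((D1mat N ^^ \<beta>) ((Dmat N ^^ r) u))))\<^sup>2 \<le> K2 * ?X"
      unfolding K2_def t_def mult.assoc[symmetric]
      by (intro l2norm_P_M_D1mat_pow_Dmat_pow_sq_le_large_M) (use assms in auto)
    then show ?thesis
      using \<open>K1 * ?X \<ge> 0\<close> by (simp add: distrib_right)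
  qed
  have "t ^ (2 * (r + \<beta>)) = (t ^ (r + \<beta>))\<^sup>2"
    by (metis mult.commute power_mult)
  then have "sqrt (t ^ (2 * (r + \<beta>))) = t ^ (r + \<beta>)"
    by (simp add: t_def)
  then have "sqrt ((K1 + K2) * ?X) = lowpass_error_const r \<beta> * t ^ (r + \<beta>) * sqrt (real N) * \<delta>"
    unfolding real_sqrt_mult lowpass_error_const_def K1_def K2_def using \<open>\<delta> \<ge> 0\<close> by simp
  then show ?thesis
    using real_le_rsqrt[OF sq] unfolding t_def by simp
qed

theorem lemma1:
  fixes r \<beta> :: nat
  assumes "r \<ge> 2" and "\<beta> \<in> {1, 2}"
  shows "\<exists>C::real. \<forall>(N::nat) (M::nat) (\<delta>::real) (x::nat \<Rightarrow> real) (q::nat \<Rightarrow> real).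
    N > 0 \<and> M > 0 \<and>
    (\<forall>i<N. 0 \<le> x i \<and> x i \<le> 1) \<and>
    min_sep N M ((D1mat N ^^ \<beta>) x) \<and>
    (\<forall>i<N. \<bar>(Dinv N ^^ r) (\<lambda>j. x j - q j) i\<bar> \<le> \<delta> / 2) \<and>
    (\<forall>i. N - r \<le> i \<and> i < N \<longrightarrow>
        \<bar>(Dinv N ^^ r) (\<lambda>j. x j - q j) i\<bar> \<le> (1 / (2 * real N)) ^ r * \<delta>)
    \<longrightarrow>
    (\<forall>xt::nat \<Rightarrow> real.
       (\<forall>i<N. \<bar>(Dinv N ^^ r) (\<lambda>j. xt j - q j) i\<bar> \<le> \<delta> / 2) \<and>
       (\<forall>i. N - r \<le> i \<and> i < N \<longrightarrow>
          \<bar>(Dinv N ^^ r) (\<lambda>j. xt j - q j) i\<bar> \<le> (1 / (2 * real N)) ^ r * \<delta>)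
       \<longrightarrow>
       l2norm N (P_M N M ((D1mat N ^^ \<beta>) (\<lambda>j. xt j - x j)))
         \<le> C * (real M / real N) ^ (r + \<beta>) * sqrt (real N) * \<delta>)"
proof (rule exI[of _ "lowpass_error_const r \<beta>"], intro allI impI, elim conjE)
  fix N M :: nat and \<delta> :: real and x q xt :: "nat \<Rightarrow> real"
  let ?e = "\<lambda>v. (Dinv N ^^ r) (\<lambda>j. v j - q j)"
  assume "N > 0" "M > 0"
    and x_bulk: "\<forall>i<N. \<bar>?e x i\<bar> \<le> \<delta> / 2"
    and x_tail: "\<forall>i. N - r \<le> i \<and> i < N \<longrightarrow> \<bar>?e x i\<bar> \<le> (1 / (2 * real N)) ^ r * \<delta>"
    and xt_bulk: "\<forall>i<N. \<bar>?e xt i\<bar> \<le> \<delta> / 2"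
    and xt_tail: "\<forall>i. N - r \<le> i \<and> i < N \<longrightarrow> \<bar>?e xt i\<bar> \<le> (1 / (2 * real N)) ^ r * \<delta>"
  define u where "u = (Dinv N ^^ r) (\<lambda>j. xt j - x j)"
  have "(\<lambda>j. xt j - x j) = (\<lambda>j. (xt j - q j) - (x j - q j))"
    by simp
  then have u_eq: "u i = ?e xt i - ?e x i" for i
    unfolding u_def by (simp only: Dinv_pow_diff)
  have "\<bar>u i\<bar> \<le> \<delta>" if "i < N" for i
    using x_bulk xt_bulk that unfolding u_eq by fastforce
  moreover have "\<bar>u i\<bar> \<le> 2 * (1 / (2 * real N)) ^ r * \<delta>" if "i < N" "N - r \<le> i" for i
    using x_tail xt_tail that unfolding u_eq by fastforce
  moreover have "(\<lambda>j. xt j - x j) = (Dmat N ^^ r) u"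
    unfolding u_def Dmat_pow_Dinv_pow ..
  ultimately show "l2norm N (P_M N M ((D1mat N ^^ \<beta>) (\<lambda>j. xt j - x j)))
      \<le> lowpass_error_const r \<beta> * (real M / real N) ^ (r + \<beta>) * sqrt (real N) * \<delta>"
    using l2norm_P_M_D1mat_pow_Dmat_pow_le[of N M r u \<delta>] \<open>N > 0\<close> \<open>M > 0\<close> assms(1) by simp
qed

end
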